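(* Let $A\in\mathbb{R}^{d\times n}$ (with $n>d$) have nonzero columns $a_1,\dots,a_n$, let $S\subset\{1,\dots,n\}$ with $|S|=m$, and let $A_S$ be the $d\times m$ matrix of columns $a_i$, $i\in S$, assumed to have full column rank. Suppose that for every $x_0'\in\mathbb{R}^n$ with support exactly $S$, writing $x'_{\mathrm{opt}}\in\mathbb{R}^m$ for its nonzero entries, we have $|a_j^T(A_S^{+})^T\operatorname{sign}(x'_{\mathrm{opt}})|<1$ for all $j\notin S$. Then $\max_{j\notin S}\|A_S^{+}a_j\|_1<1$.
   Context: $A_S^{+}$ is the Moore–Penrose pseudoinverse of $A_S$; $\operatorname{sign}$ is applied componentwise. *)

theory Defs
  imports "Jordan_Normal_Form.DL_Rank"
begin

text \<open>Matrices are Jordan_Normal_Form matrices; indices are 0-based.\<close>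

definition pinv :: "real mat \<Rightarrow> real mat" where
  "pinv A = (THE B. B \<in> carrier_mat (dim_col A) (dim_row A) \<and>
     A * B * A = A \<and> B * A * B = B \<and>
     transpose_mat (A * B) = A * B \<and> transpose_mat (B * A) = B * A)"

definition col_submat :: "real mat \<Rightarrow> nat set \<Rightarrow> real mat" where
  "col_submat A S = mat_of_cols (dim_row A) (map (col A) (sorted_list_of_set S))"

definition restrict_vec :: "real vec \<Rightarrow> nat set \<Rightarrow> real vec" where
  "restrict_vec x S = vec (card S) (\<lambda>k. x $ (sorted_list_of_set S ! k))"

definition sign_vec :: "real vec \<Rightarrow> real vec" where
  "sign_vec v = map_vec sgn v"

definition norm1_vec :: "real vec \<Rightarrow> real" where
  "norm1_vec v = (\<Sum>i<dim_vec v. \<bar>v $ i\<bar>)"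

end

theory Submission
  imports Defs
begin

(*
  For j outside S put v = A_S^+ a_j. Choosing s in {-1,1}^m with s_k v_k = |v_k| gives
  |v|_1 = s . v = a_j . (A_S^+)^T s, and every such s is the sign vector of the restriction
  of some x_0 with support exactly S, so the hypothesis bounds |v|_1 by 1. Since n > d >= m
  the maximum is over a nonempty set. The remaining work is to know that A_S^+ is an m x d
  matrix at all: full column rank makes the Gram matrix A_S^T A_S invertible,
  (A_S^T A_S)^-1 A_S^T satisfies the Penrose conditions, and these determine the
  pseudoinverse uniquely.
*)

lemma penrose_conditions_unique:
  fixes A B C :: "'a :: comm_ring_1 mat"
  assumes A: "A \<in> carrier_mat d m" and B: "B \<in> carrier_mat m d" and C: "C \<in> carrier_mat m d"
    and ABA: "A * B * A = A" and BAB: "B * A * B = B"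
    and AB: "transpose_mat (A * B) = A * B" and BA: "transpose_mat (B * A) = B * A"
    and ACA: "A * C * A = A" and CAC: "C * A * C = C"
    and AC: "transpose_mat (A * C) = A * C" and CA: "transpose_mat (C * A) = C * A"
  shows "B = C"
proof -
  have AB_c: "A * B \<in> carrier_mat d d" and AC_c: "A * C \<in> carrier_mat d d"
    and BA_c: "B * A \<in> carrier_mat m m" and CA_c: "C * A \<in> carrier_mat m m"
    using A B C by auto
  have "A * B = transpose_mat ((A * C) * (A * B))"
    using ACA AB assoc_mult_mat[OF AC_c A B] by simp
  also have "\<dots> = (A * B) * (A * C)"
    using transpose_mult[OF AC_c AB_c] AB AC by simp
  also have "\<dots> = A * C"
    using ABA assoc_mult_mat[OF AB_c A C] by simp
  finally have AB_AC: "A * B = A * C" .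
  have "B * A = transpose_mat ((B * A) * (C * A))"
    using ACA BA assoc_mult_mat[OF B A C] assoc_mult_mat[OF B AC_c A] assoc_mult_mat[OF BA_c C A]
    by metis
  also have "\<dots> = (C * A) * (B * A)"
    using transpose_mult[OF BA_c CA_c] BA CA by simp
  also have "\<dots> = C * A"
    using ABA assoc_mult_mat[OF C A B] assoc_mult_mat[OF CA_c B A] assoc_mult_mat[OF C AB_c A]
    by metis
  finally have BA_CA: "B * A = C * A" .
  have "B = (B * A) * B" using BAB by simp
  also have "\<dots> = C * (A * C)"
    using BA_CA AB_AC assoc_mult_mat[OF C A B] by simp
  finally show ?thesis using CAC assoc_mult_mat[OF C A C] by simp
qed

lemma pinv_eqI:
  fixes A B :: "real mat"
  assumes "B \<in> carrier_mat (dim_col A) (dim_row A)" and "A * B * A = A" and "B * A * B = B"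
    and "transpose_mat (A * B) = A * B" and "transpose_mat (B * A) = B * A"
  shows "pinv A = B"
  unfolding pinv_def
  by (rule the_equality) (use assms penrose_conditions_unique[of A "dim_row A" "dim_col A"] in auto)

lemma pinv_eq_inverse_gram_mult_transpose:
  fixes M Gi :: "real mat"
  assumes M: "M \<in> carrier_mat d m" and Gi: "Gi \<in> carrier_mat m m"
    and left: "Gi * (transpose_mat M * M) = 1\<^sub>m m" and right: "(transpose_mat M * M) * Gi = 1\<^sub>m m"
  shows "pinv M = Gi * transpose_mat M"
proof (rule pinv_eqI)
  have Mt: "transpose_mat M \<in> carrier_mat m d" using M by simp
  have G: "transpose_mat M * M \<in> carrier_mat m m" using M by simp
  have Gi_sym: "transpose_mat Gi = Gi"
  proof -
    have "transpose_mat Gi = transpose_mat Gi * ((transpose_mat M * M) * Gi)" using right Gi by simp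
    also have "\<dots> = transpose_mat ((transpose_mat M * M) * Gi) * Gi"
      using assoc_mult_mat[of "transpose_mat Gi" m m _ m Gi m] Gi G
      by (simp add: transpose_mult[OF G Gi] transpose_mult[OF Mt M])
    also have "\<dots> = Gi" using right Gi by simp
    finally show ?thesis .
  qed
  have BM: "Gi * transpose_mat M * M = 1\<^sub>m m"
    using assoc_mult_mat[OF Gi Mt M] left by simp
  show "Gi * transpose_mat M \<in> carrier_mat (dim_col M) (dim_row M)" using Gi M by simp
  show "M * (Gi * transpose_mat M) * M = M"
    using BM M Gi by (simp add: assoc_mult_mat[of M d m _ d M m])
  show "Gi * transpose_mat M * M * (Gi * transpose_mat M) = Gi * transpose_mat M"
    using BM Gi M by simp
  show "transpose_mat (Gi * transpose_mat M * M) = Gi * transpose_mat M * M"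
    using BM by simp
  have "transpose_mat (M * (Gi * transpose_mat M)) = M * (transpose_mat Gi * transpose_mat M)"
    using transpose_mult[OF M mult_carrier_mat[OF Gi Mt]] transpose_mult[OF Gi Mt] M Gi
    by (simp add: assoc_mult_mat[of M d m "transpose_mat Gi" m "transpose_mat M" d])
  then show "transpose_mat (M * (Gi * transpose_mat M)) = M * (Gi * transpose_mat M)"
    using Gi_sym by simp
qed

context
  fixes M :: "real mat" and d m :: nat
  assumes M: "M \<in> carrier_mat d m" and rank: "vec_space.rank d M = m"
begin

interpretation vec_space "TYPE(real)" d .

lemma full_col_rank_distinct_cols: "distinct (cols M)"
proof (rule ccontr)
  assume "\<not> distinct (cols M)"
  obtain T where T: "maximal T (\<lambda>T. T \<subseteq> set (cols M) \<and> lin_indpt T)"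
    using maximal_exists[of "\<lambda>T. T \<subseteq> set (cols M) \<and> lin_indpt T" "card (set (cols M))" "{}"]
    by (meson List.finite_set card_mono empty_iff empty_subsetI finite_lin_indpt2 rev_finite_subset)
  have "card T \<le> card (set (cols M))" using T by (simp add: card_mono maximal_def)
  also have "\<dots> < length (cols M)"
    using \<open>\<not> distinct (cols M)\<close> card_distinct card_length nat_less_le by metis
  finally have "card T < m" using M by simp
  then show False using rank_card_indpt[OF M T] rank by simp
qed

lemma full_col_rank_lin_indpt: "lin_indpt (set (cols M))"
  using full_rank_lin_indpt[OF M rank full_col_rank_distinct_cols] .

lemma full_col_rank_le_dim_row: "m \<le> d"
proof -
  have "set (cols M) \<subseteq> carrier_vec d" using M cols_dim by blast
  then have "card (set (cols M)) \<le> dim"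
    using li_le_dim(2)[OF fin_dim _ full_col_rank_lin_indpt] by (simp add: class_ring_simps)
  then show ?thesis
    using full_col_rank_distinct_cols M dim_is_n by (simp add: distinct_card)
qed

lemma full_col_rank_mult_vec_eq_0:
  assumes "x \<in> carrier_vec m" and "M *\<^sub>v x = 0\<^sub>v d"
  shows "x = 0\<^sub>v m"
  using lin_depI[OF M assms(1) _ assms(2) full_col_rank_distinct_cols] full_col_rank_lin_indpt
  by blast

lemma det_gram_mat_neq_0: "det (transpose_mat M * M) \<noteq> 0"
proof
  assume "det (transpose_mat M * M) = 0"
  then obtain v where v: "v \<in> carrier_vec m" "v \<noteq> 0\<^sub>v m" "(transpose_mat M * M) *\<^sub>v v = 0\<^sub>v m"
    using det_0_iff_vec_prod_zero_field[of "transpose_mat M * M" m] M by auto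
  have Mv: "M *\<^sub>v v \<in> carrier_vec d" using M v by simp
  have "(M *\<^sub>v v) \<bullet> (M *\<^sub>v v) = (transpose_mat M *\<^sub>v (M *\<^sub>v v)) \<bullet> v"
    using transpose_vec_mult_scalar[OF M v(1) Mv] by simp
  also have "\<dots> = 0"
    using v M by (simp add: assoc_mult_mat_vec[of "transpose_mat M" m d M m v])
  finally have "M *\<^sub>v v = 0\<^sub>v d"
    using conjugate_square_eq_0_vec[OF Mv] by simp
  then show False using full_col_rank_mult_vec_eq_0 v by blast
qed

lemma pinv_full_col_rank_carrier_mat: "pinv M \<in> carrier_mat m d"
proof -
  have G: "transpose_mat M * M \<in> carrier_mat m m" using M by simp
  obtain Gi where "Gi \<in> carrier_mat m m"
    and "Gi * (transpose_mat M * M) = 1\<^sub>m m" and "(transpose_mat M * M) * Gi = 1\<^sub>m m"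
    using det_non_zero_imp_unit[OF G det_gram_mat_neq_0] unfolding Units_def
    by (auto simp: ring_mat_simps)
  then show ?thesis using pinv_eq_inverse_gram_mult_transpose[OF M] M by simp
qed

end

lemma col_submat_carrier_mat: "col_submat A S \<in> carrier_mat (dim_row A) (card S)"
  unfolding col_submat_def by (cases "finite S") auto

lemma norm1_vec_eq_scalar_prod_signs:
  fixes v :: "real vec"
  obtains s where "s \<in> carrier_vec (dim_vec v)" and "\<forall>k<dim_vec v. s $ k = 1 \<or> s $ k = -1"
    and "s \<bullet> v = norm1_vec v"
proof
  let ?s = "vec (dim_vec v) (\<lambda>k. if v $ k < 0 then -1 else 1) :: real vec"
  show "?s \<in> carrier_vec (dim_vec v)" and "\<forall>k<dim_vec v. ?s $ k = 1 \<or> ?s $ k = -1" by auto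
  show "?s \<bullet> v = norm1_vec v"
    unfolding scalar_prod_def norm1_vec_def by (rule sum.cong) auto
qed

lemma exists_vec_with_support_and_signs:
  fixes S :: "nat set" and s :: "real vec"
  assumes S: "S \<subseteq> {0..<n}" and s: "s \<in> carrier_vec (card S)"
    and signs: "\<forall>k<card S. s $ k = 1 \<or> s $ k = -1"
  obtains x0 where "x0 \<in> carrier_vec n" and "{i. i < n \<and> x0 $ i \<noteq> 0} = S"
    and "sign_vec (restrict_vec x0 S) = s"
proof
  let ?L = "sorted_list_of_set S"
  let ?x0 = "vec n (\<lambda>i. if i \<in> S then s $ find_first i ?L else 0)"
  have "finite S" using S finite_subset by blast
  then have L: "distinct ?L" "set ?L = S" "length ?L = card S" by auto
  show "?x0 \<in> carrier_vec n" by simp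
  have "s $ find_first i ?L \<noteq> 0" if "i \<in> S" for i
    using signs find_first_le[of i ?L] L that by force
  then show "{i. i < n \<and> ?x0 $ i \<noteq> 0} = S" using S by (auto split: if_splits)
  have "sgn (?x0 $ (?L ! k)) = s $ k" if "k < card S" for k
  proof -
    have "?L ! k \<in> S" using L that nth_mem by metis
    moreover have "s $ k = 1 \<or> s $ k = -1" using signs that by blast
    ultimately show ?thesis using S that L find_first_unique[of ?L k] by auto
  qed
  then show "sign_vec (restrict_vec ?x0 S) = s"
    using s by (auto simp: sign_vec_def restrict_vec_def)
qed

lemma norm1_vec_mult_vec_less_if_sign_bounds:
  fixes P :: "real mat" and a :: "real vec"
  assumes P: "P \<in> carrier_mat m d" and a: "a \<in> carrier_vec d"
    and bound: "\<And>s. s \<in> carrier_vec m \<Longrightarrow> \<forall>k<m. s $ k = 1 \<or> s $ k = -1 \<Longrightarrow>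
      \<bar>a \<bullet> (transpose_mat P *\<^sub>v s)\<bar> < c"
  shows "norm1_vec (P *\<^sub>v a) < c"
proof -
  obtain s where s: "s \<in> carrier_vec m" "\<forall>k<m. s $ k = 1 \<or> s $ k = -1"
    and norm1: "s \<bullet> (P *\<^sub>v a) = norm1_vec (P *\<^sub>v a)"
    using norm1_vec_eq_scalar_prod_signs[of "P *\<^sub>v a"] P by auto
  have "a \<bullet> (transpose_mat P *\<^sub>v s) = (transpose_mat P *\<^sub>v s) \<bullet> a"
    using P s by (simp add: comm_scalar_prod[OF a])
  also have "\<dots> = norm1_vec (P *\<^sub>v a)"
    using transpose_vec_mult_scalar[OF P a s(1)] norm1 by simp
  finally show ?thesis using bound[OF s] by simp
qed

theorem lemma3:
  fixes A :: "real mat" and d n m :: nat and S :: "nat set"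
  assumes "A \<in> carrier_mat d n"
    and "n > d"
    and "\<forall>i<n. col A i \<noteq> 0\<^sub>v d"
    and "S \<subseteq> {0..<n}"
    and "card S = m"
    and "vec_space.rank d (col_submat A S) = m"
    and "\<forall>x0 \<in> carrier_vec n. {i. i < n \<and> x0 $ i \<noteq> 0} = S \<longrightarrow>
           (\<forall>j \<in> {0..<n} - S.
              \<bar>col A j \<bullet> (transpose_mat (pinv (col_submat A S)) *\<^sub>v sign_vec (restrict_vec x0 S))\<bar> < 1)"
  shows "Max ((\<lambda>j. norm1_vec (pinv (col_submat A S) *\<^sub>v col A j)) ` ({0..<n} - S)) < 1"
proof -
  have M: "col_submat A S \<in> carrier_mat d m"
    using col_submat_carrier_mat[of A S] assms(1,5) by simp
  have "m < n" using full_col_rank_le_dim_row[OF M assms(6)] assms(2) by simp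
  then have "S \<noteq> {0..<n}" using assms(5) by auto
  then have "{0..<n} - S \<noteq> {}" using assms(4) by blast
  moreover have "norm1_vec (pinv (col_submat A S) *\<^sub>v col A j) < 1" if j: "j \<in> {0..<n} - S" for j
  proof (rule norm1_vec_mult_vec_less_if_sign_bounds)
    show "pinv (col_submat A S) \<in> carrier_mat m d" using pinv_full_col_rank_carrier_mat[OF M assms(6)] .
    show "col A j \<in> carrier_vec d" using assms(1) by (metis carrier_matD(1) carrier_vec_dim_vec dim_col)
    fix s :: "real vec" assume "s \<in> carrier_vec m" and "\<forall>k<m. s $ k = 1 \<or> s $ k = -1"
    then obtain x0 where "x0 \<in> carrier_vec n" "{i. i < n \<and> x0 $ i \<noteq> 0} = S"
      and "sign_vec (restrict_vec x0 S) = s"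
      using exists_vec_with_support_and_signs[OF assms(4)] assms(5) by metis
    then show "\<bar>col A j \<bullet> (transpose_mat (pinv (col_submat A S)) *\<^sub>v s)\<bar> < 1"
      using assms(7) j by blast
  qed
  ultimately show ?thesis by simp
qed

end
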